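(* Let $\mathbb{M}=(M_p)_{p\in\mathbb{N}_0}$ be a sequence of positive real numbers with $M_0=1$ such that $\widehat{\mathbb{M}}=(p!M_p)_{p\in\mathbb{N}_0}$ is a weight sequence and $\lim_{p\to\infty}M_p^{1/p}=\infty$. Assume that $\gamma(\omega_{\widehat{\mathbb{M}}})>1$. Then $\gamma(\omega_{\widehat{\mathbb{M}}})=\gamma(\omega_{\mathbb{M}})+1$.
   Context: A weight sequence is a sequence $\mathbb{L}=(L_p)_{p\in\mathbb{N}_0}$ of positive reals with $L_0=1$, $L_p^2\le L_{p-1}L_{p+1}$ for $p\ge1$, and $\lim_{p\to\infty}L_p^{1/p}=\infty$. For a positive sequence $\mathbb{L}$ with $L_0=1$, its associated function is $\omega_{\mathbb{L}}(t):=\sup_{p\in\mathbb{N}_0}\log(t^p/L_p)$ for $t>0$ and $\omega_{\mathbb{L}}(0)=0$. For a nondecreasing $\sigma:[0,\infty)\to[0,\infty)$ with $\sigma(t)\to\infty$ and $\gamma>0$, say $(P_{\sigma,\gamma})$ holds if there is $K>1$ with $\limsup_{t\to\infty}\sigma(K^{\gamma}t)/\sigma(t)<K$; $\gamma(\sigma):=\sup\{\gamma>0:(P_{\sigma,\gamma})\text{ holds}\}$, and $\gamma(\sigma):=0$ if none holds. *)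

theory Defs
  imports "HOL-Analysis.Analysis"
begin

definition weight_sequence :: "(nat \<Rightarrow> real) \<Rightarrow> bool" where
  "weight_sequence L \<longleftrightarrow>
     (\<forall>p. L p > 0) \<and> L 0 = 1 \<and>
     (\<forall>p\<ge>1. (L p)\<^sup>2 \<le> L (p - 1) * L (p + 1)) \<and>
     filterlim (\<lambda>p. root p (L p)) at_top sequentially"

definition assoc_fun :: "(nat \<Rightarrow> real) \<Rightarrow> real \<Rightarrow> real" where
  "assoc_fun L t = (if t = 0 then 0 else (SUP p::nat. ln (t ^ p / L p)))"

definition prop_P :: "(real \<Rightarrow> real) \<Rightarrow> real \<Rightarrow> bool" where
  "prop_P \<sigma> \<gamma> \<longleftrightarrow>
     (\<exists>K>1. Limsup at_top (\<lambda>t. ereal (\<sigma> (K powr \<gamma> * t) / \<sigma> t)) < ereal K)"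


definition gamma_index :: "(real \<Rightarrow> real) \<Rightarrow> ereal" where
  "gamma_index \<sigma> = (if \<exists>\<gamma>>0. prop_P \<sigma> \<gamma>
      then Sup {ereal \<gamma> | \<gamma>. \<gamma> > 0 \<and> prop_P \<sigma> \<gamma>} else 0)"

end

(* Write \<sigma> for the associated function of M and \<tau> for that of p! M_p.  Since
   s^p / p! \<le> e^s, we get \<tau> t \<le> \<sigma> (t / s) + s for every s > 0; conversely, if p is the index at
   which the supremum defining \<sigma> u is attained, then p \<le> \<sigma> (e u) and ln p! \<le> p ln s give
   \<sigma> u \<le> \<tau> (u s) for every s \<ge> p.  Consequently \<tau> t is comparable to the balance point of
   s = \<sigma> (e t / s), and \<sigma> u to the balance point of s = \<tau> (e u s).

   The index \<gamma> of a function is the supremum of 1/b over the exponents b of uniform power bounds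
   \<sigma> (k t) \<le> C k^b \<sigma> t (k \<ge> 1, t large).  Passing through the balance points, exponent b for \<sigma>
   gives exponent b/(1+b) for \<tau>, and exponent b < 1 for \<tau> gives b/(1-b) for \<sigma>.  As
   1/(b/(1+b)) = 1/b + 1 and 1/(b/(1-b)) = 1/b - 1, the two indices differ by exactly 1; the
   restriction b < 1 is why \<gamma>(\<tau>) > 1 is assumed.  Log-convexity of p! M_p)^(1/p) \<rightarrow> \<infinity>. *)

theory Submission
  imports Defs
begin

lemma power_div_fact_le_exp:
  fixes s :: real
  assumes "0 \<le> s"
  shows "s ^ p / fact p \<le> exp s"
proof -
  have "(\<lambda>n. s ^ n / fact n) sums exp s"
    using exp_converges[of s] by (simp add: divide_inverse mult.commute scaleR_conv_of_real)
  hence "summable (\<lambda>n. s ^ n / fact n)" and "exp s = (\<Sum>n. s ^ n / fact n)"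
    by (auto simp: sums_iff)
  moreover have "(\<Sum>n\<in>{p}. s ^ n / fact n) \<le> (\<Sum>n. s ^ n / fact n)"
    by (rule sum_le_suminf[OF \<open>summable _\<close>]) (use assms in auto)
  ultimately show ?thesis by simp
qed

lemma ln_fact_le:
  assumes "real p \<le> s" and "0 < s"
  shows "ln (fact p) \<le> real p * ln s"
proof (cases "p = 0")
  case False
  have "ln (fact p) \<le> ln (real p ^ p)"
    using fact_le_power[of p, where 'a=real] False by (subst ln_le_cancel_iff) auto
  also have "\<dots> = real p * ln (real p)" using False by (simp add: ln_realpow)
  also have "\<dots> \<le> real p * ln s" using assms False by (intro mult_left_mono) auto
  finally show ?thesis .
qed simp

lemma le_powr_of_powr_le:
  fixes r c A k b :: real
  assumes "0 < r" "0 < c" "0 \<le> A" "0 \<le> k" and "r powr c \<le> A * k powr b"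
  shows "r \<le> A powr (1 / c) * k powr (b / c)"
proof -
  have "r = (r powr c) powr (1 / c)" using assms by (simp add: powr_powr)
  also have "\<dots> \<le> (A * k powr b) powr (1 / c)" using assms by (intro powr_mono2) auto
  also have "\<dots> = A powr (1 / c) * k powr (b / c)" using assms by (simp add: powr_mult powr_powr)
  finally show ?thesis .
qed

lemma le_powr_of_le_mult_powr_div:
  fixes r C k b :: real
  assumes "0 < r" "0 \<le> b" "0 \<le> C" "0 \<le> k" and "r \<le> C * (k / r) powr b"
  shows "r \<le> C powr (1 / (1 + b)) * k powr (b / (1 + b))"
proof (rule le_powr_of_powr_le)
  have "r powr (1 + b) = r * r powr b" using assms by (simp add: powr_add)
  also have "\<dots> \<le> C * (k / r) powr b * r powr b" using assms by (intro mult_right_mono) auto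
  also have "\<dots> = C * k powr b" using assms by (simp add: powr_divide)
  finally show "r powr (1 + b) \<le> C * k powr b" .
qed (use assms in auto)

lemma le_powr_of_le_mult_powr_mult:
  fixes r C k b :: real
  assumes "0 < r" "b < 1" "0 \<le> C" "0 \<le> k" and "r \<le> C * (k * r) powr b"
  shows "r \<le> C powr (1 / (1 - b)) * k powr (b / (1 - b))"
proof (rule le_powr_of_powr_le)
  have "r powr (1 - b) = r / r powr b" using assms by (simp add: powr_diff)
  also have "\<dots> \<le> C * (k * r) powr b / r powr b" using assms by (intro divide_right_mono) auto
  also have "\<dots> = C * k powr b" using assms by (simp add: powr_mult)
  finally show "r powr (1 - b) \<le> C * k powr b" .
qed (use assms in auto)

lemma le_exp_one_mult: "0 \<le> t \<Longrightarrow> t \<le> exp 1 * (t :: real)"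
  using mult_right_mono[of 1 "exp 1" t] by simp

lemma balancing_scaleE:
  fixes C b :: real
  assumes "1 \<le> C" "0 \<le> b" "b < 1"
  obtains \<epsilon> where "0 < \<epsilon>" "\<epsilon> \<le> 1" "4 * C * (exp 1 / \<epsilon>) powr b * \<epsilon> \<le> 1"
proof
  define \<epsilon> where "\<epsilon> = (1 / (4 * C * exp b)) powr (1 / (1 - b))"
  show "0 < \<epsilon>" using assms by (simp add: \<epsilon>_def)
  have "1 \<le> 4 * C * exp b" using assms by (smt (verit) mult_ge1_I one_le_exp_iff)
  thus "\<epsilon> \<le> 1" unfolding \<epsilon>_def using assms by (intro powr_le1) auto
  have "(exp 1 / \<epsilon>) powr b * \<epsilon> = exp b * \<epsilon> powr (1 - b)"
    using \<open>0 < \<epsilon>\<close> by (simp add: powr_divide powr_diff exp_powr_real)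
  also have "\<epsilon> powr (1 - b) = 1 / (4 * C * exp b)"
    unfolding \<epsilon>_def using assms by (simp add: powr_powr)
  finally have "4 * C * ((exp 1 / \<epsilon>) powr b * \<epsilon>) \<le> 1" using assms by simp
  thus "4 * C * (exp 1 / \<epsilon>) powr b * \<epsilon> \<le> 1" by (simp add: mult.assoc)
qed

locale weak_weight =
  fixes L :: "nat \<Rightarrow> real"
  assumes pos: "\<And>p. 0 < L p" and L0: "L 0 = 1"
    and root_tendsto: "filterlim (\<lambda>p. root p (L p)) at_top sequentially"
begin

lemma finite_le_power:
  assumes "0 < t"
  shows "finite {p. L p \<le> t ^ p}"
proof -
  obtain N where N: "\<And>p. N \<le> p \<Longrightarrow> t < root p (L p)"
    using root_tendsto[unfolded filterlim_at_top_dense, rule_format, of t]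
    by (auto simp: eventually_sequentially)
  have "t ^ p < L p" if "max N 1 \<le> p" for p
  proof -
    have "t ^ p < root p (L p) ^ p" using N[of p] that assms by (intro power_strict_mono) auto
    also have "\<dots> = L p" using that pos[of p] by (simp add: real_root_pow_pos2 less_imp_le)
    finally show ?thesis .
  qed
  hence "{p. L p \<le> t ^ p} \<subseteq> {..<max N 1}" by (force simp: not_less)
  thus ?thesis by (rule finite_subset) simp
qed

lemma assoc_fun_attained:
  assumes "0 < t"
  obtains p where "assoc_fun L t = real p * ln t - ln (L p)"
    and "\<And>q. real q * ln t - ln (L q) \<le> real p * ln t - ln (L p)"
proof -
  define g where "g q = real q * ln t - ln (L q)" for q
  have g_eq: "g q = ln (t ^ q / L q)" for q
    using assms pos[of q] by (simp add: g_def ln_div ln_realpow)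
  define F where "F = {p. L p \<le> t ^ p}"
  have "finite (g ` F)" "0 \<in> F" using finite_le_power[OF assms] L0 by (auto simp: F_def)
  hence "Max (g ` F) \<in> g ` F" by (intro Max_in) auto
  then obtain p where p: "p \<in> F" "g p = Max (g ` F)" by auto
  have g_le: "g q \<le> g p" for q
  proof (cases "q \<in> F")
    case True thus ?thesis using p \<open>finite (g ` F)\<close> by simp
  next
    case False
    hence "ln (t ^ q) < ln (L q)" using assms pos[of q] by (simp add: F_def)
    hence "g q < 0" using assms by (simp add: g_def ln_realpow)
    also have "0 = g 0" using L0 by (simp add: g_def)
    also have "\<dots> \<le> g p" using p \<open>0 \<in> F\<close> \<open>finite (g ` F)\<close> by simp
    finally show ?thesis by simp
  qed
  have "assoc_fun L t = Sup (range g)" using assms by (simp add: assoc_fun_def g_eq)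
  also have "\<dots> = g p" using g_le by (intro cSup_eq_maximum) auto
  finally show ?thesis using that g_le by (simp add: g_def)
qed

lemma le_assoc_fun: "0 < t \<Longrightarrow> real q * ln t - ln (L q) \<le> assoc_fun L t"
  by (metis assoc_fun_attained)

lemma assoc_fun_nonneg: "0 < t \<Longrightarrow> 0 \<le> assoc_fun L t"
  using le_assoc_fun[of t 0] L0 by simp

lemma assoc_fun_mono:
  assumes "0 < s" and "s \<le> t"
  shows "assoc_fun L s \<le> assoc_fun L t"
proof -
  obtain p where "assoc_fun L s = real p * ln s - ln (L p)"
    using assoc_fun_attained[OF assms(1)] by blast
  also have "\<dots> \<le> real p * ln t - ln (L p)" using assms by (auto intro!: mult_left_mono)
  also have "\<dots> \<le> assoc_fun L t" using assms by (intro le_assoc_fun) auto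
  finally show ?thesis .
qed

lemma assoc_fun_mono_on: "mono_on {0<..} (assoc_fun L)"
  by (rule mono_onI) (auto intro: assoc_fun_mono)

lemma assoc_fun_tendsto_at_top: "filterlim (assoc_fun L) at_top at_top"
proof (rule filterlim_at_top_mono)
  show "filterlim (\<lambda>t. - ln (L 1) + ln t) at_top at_top"
    by (rule filterlim_tendsto_add_at_top[OF tendsto_const ln_at_top])
  show "\<forall>\<^sub>F t in at_top. - ln (L 1) + ln t \<le> assoc_fun L t"
    using eventually_gt_at_top[of 0] by eventually_elim (use le_assoc_fun[of _ 1] in simp)
qed

end

definition power_growth_bound :: "(real \<Rightarrow> real) \<Rightarrow> real \<Rightarrow> bool" where
  "power_growth_bound \<sigma> b \<longleftrightarrow>
     (\<exists>C. \<forall>\<^sub>F t in at_top. \<forall>k\<ge>1. \<sigma> (k * t) \<le> C * k powr b * \<sigma> t)"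

lemma power_growth_boundE:
  assumes "power_growth_bound \<sigma> b" and "\<forall>\<^sub>F t in at_top. 1 \<le> \<sigma> t"
  obtains C v0 where "1 \<le> C" "1 \<le> v0" "\<And>v. v0 \<le> v \<Longrightarrow> 1 \<le> \<sigma> v"
    "\<And>v k. v0 \<le> v \<Longrightarrow> 1 \<le> k \<Longrightarrow> \<sigma> (k * v) \<le> C * k powr b * \<sigma> v"
proof -
  obtain C where "\<forall>\<^sub>F t in at_top. \<forall>k\<ge>1. \<sigma> (k * t) \<le> C * k powr b * \<sigma> t"
    using assms(1) by (auto simp: power_growth_bound_def)
  with assms(2) have
    "\<forall>\<^sub>F t in at_top. 1 \<le> \<sigma> t \<and> (\<forall>k\<ge>1. \<sigma> (k * t) \<le> max C 1 * k powr b * \<sigma> t)"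
  proof eventually_elim
    case (elim t)
    have "C * k powr b * \<sigma> t \<le> max C 1 * k powr b * \<sigma> t" for k
      using elim by (intro mult_right_mono) auto
    with elim show ?case by (meson order.trans)
  qed
  then obtain N where
    "\<And>v. N \<le> v \<Longrightarrow> 1 \<le> \<sigma> v \<and> (\<forall>k\<ge>1. \<sigma> (k * v) \<le> max C 1 * k powr b * \<sigma> v)"
    by (auto simp: eventually_at_top_linorder)
  then show thesis by (intro that[of "max C 1" "max N 1"]) auto
qed

lemma power_growth_bound_comparable:
  assumes "power_growth_bound g a"
    and "\<forall>\<^sub>F t in at_top. 0 \<le> g t \<and> f t \<le> A * g t \<and> g t \<le> B * f t" and "0 \<le> A"
  shows "power_growth_bound f a"
proof -
  obtain N where N: "\<And>t. N \<le> t \<Longrightarrow> 0 \<le> g t \<and> f t \<le> A * g t \<and> g t \<le> B * f t"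
    using assms(2) by (auto simp: eventually_at_top_linorder)
  obtain C where "\<forall>\<^sub>F t in at_top. \<forall>k\<ge>1. g (k * t) \<le> C * k powr a * g t"
    using assms(1) by (auto simp: power_growth_bound_def)
  moreover have "\<forall>\<^sub>F t in at_top. max N 0 \<le> t" by (rule eventually_ge_at_top)
  ultimately have "\<forall>\<^sub>F t in at_top. \<forall>k\<ge>1. f (k * t) \<le> A * max C 0 * B * k powr a * f t"
  proof eventually_elim
    case (elim t)
    show ?case
    proof (intro allI impI)
      fix k :: real assume k: "1 \<le> k"
      have "t \<le> k * t" using elim k mult_right_mono[of 1 k t] by simp
      have "g (k * t) \<le> C * k powr a * g t" using elim k by simp
      also have "\<dots> \<le> max C 0 * k powr a * g t" using N[of t] elim by (intro mult_right_mono) auto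
      also have "\<dots> \<le> max C 0 * k powr a * (B * f t)"
        using N[of t] elim by (intro mult_left_mono) auto
      finally have "A * g (k * t) \<le> A * (max C 0 * k powr a * (B * f t))"
        using \<open>0 \<le> A\<close> by (rule mult_left_mono)
      moreover have "f (k * t) \<le> A * g (k * t)" using N \<open>t \<le> k * t\<close> elim by simp
      ultimately show "f (k * t) \<le> A * max C 0 * B * k powr a * f t" by (simp add: mult_ac)
    qed
  qed
  thus ?thesis by (auto simp: power_growth_bound_def)
qed

lemma dilation_iterate:
  fixes \<sigma> :: "real \<Rightarrow> real"
  assumes step: "\<And>t. t0 \<le> t \<Longrightarrow> \<sigma> (L * t) \<le> c * \<sigma> t"
    and "1 \<le> L" "0 \<le> c" "0 \<le> t0" "t0 \<le> t"
  shows "\<sigma> (L ^ n * t) \<le> c ^ n * \<sigma> t"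
  using \<open>t0 \<le> t\<close>
proof (induction n arbitrary: t)
  case (Suc n)
  have "t0 \<le> L * t" using Suc.prems assms(2,4) mult_right_mono[of 1 L t] by simp
  have "\<sigma> (L ^ Suc n * t) = \<sigma> (L ^ n * (L * t))" by (simp add: mult_ac)
  also have "\<dots> \<le> c ^ n * \<sigma> (L * t)" using Suc.IH[OF \<open>t0 \<le> L * t\<close>] .
  also have "\<dots> \<le> c ^ n * (c * \<sigma> t)" using step[OF Suc.prems] assms(3) by (intro mult_left_mono) auto
  finally show ?case by (simp add: mult_ac)
qed simp

lemma power_growth_bound_of_dilation:
  assumes mono: "mono_on {0<..} \<sigma>" and L: "1 < L" and c: "1 \<le> c"
    and step: "\<forall>\<^sub>F t in at_top. 0 \<le> \<sigma> t \<and> \<sigma> (L * t) \<le> c * \<sigma> t"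
  shows "power_growth_bound \<sigma> (ln c / ln L)"
proof -
  obtain N where N: "\<And>t. N \<le> t \<Longrightarrow> 0 \<le> \<sigma> t \<and> \<sigma> (L * t) \<le> c * \<sigma> t"
    using step by (auto simp: eventually_at_top_linorder)
  have "\<sigma> (k * t) \<le> c * k powr (ln c / ln L) * \<sigma> t" if t: "max N 1 \<le> t" and k: "1 \<le> k" for t k
  proof -
    define n where "n = nat \<lceil>ln k / ln L\<rceil>"
    have "ln k / ln L \<le> real n" unfolding n_def by linarith
    hence "ln k \<le> ln (L ^ n)" using L by (simp add: ln_realpow field_simps)
    hence "k \<le> L ^ n" using k L by simp
    hence "\<sigma> (k * t) \<le> \<sigma> (L ^ n * t)"
      using t k by (intro mono_onD[OF mono]) (auto intro: mult_right_mono)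
    also have "\<dots> \<le> c ^ n * \<sigma> t"
      using N c L t by (intro dilation_iterate[of "max N 1"]) auto
    also have "c ^ n \<le> c * k powr (ln c / ln L)"
    proof -
      have "real n \<le> ln k / ln L + 1"
        unfolding n_def using k L by (simp add: divide_nonneg_pos)
      hence "real n * ln c \<le> (ln k / ln L + 1) * ln c" using c by (intro mult_right_mono) auto
      hence "exp (real n * ln c) \<le> exp (ln c + ln c / ln L * ln k)" by (simp add: field_simps)
      thus ?thesis using c k by (simp add: exp_of_nat_mult exp_add powr_def)
    qed
    hence "c ^ n * \<sigma> t \<le> c * k powr (ln c / ln L) * \<sigma> t" using N t by (intro mult_right_mono) auto
    finally show ?thesis .
  qed
  thus ?thesis unfolding power_growth_bound_def eventually_at_top_linorder by blast
qed

lemma prop_P_imp_power_growth_bound: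
  assumes mono: "mono_on {0<..} \<sigma>" and pos: "\<forall>\<^sub>F t in at_top. 0 < \<sigma> t"
    and "0 < \<gamma>" and "prop_P \<sigma> \<gamma>"
  obtains b where "0 \<le> b" "b * \<gamma> < 1" "power_growth_bound \<sigma> b"
proof -
  obtain K where K: "1 < K" "Limsup at_top (\<lambda>t. ereal (\<sigma> (K powr \<gamma> * t) / \<sigma> t)) < ereal K"
    using \<open>prop_P \<sigma> \<gamma>\<close> by (auto simp: prop_P_def)
  then obtain c where c: "Limsup at_top (\<lambda>t. ereal (\<sigma> (K powr \<gamma> * t) / \<sigma> t)) < ereal c"
    and "ereal c < ereal K"
    using ereal_dense2 by blast
  define c' where "c' = max c 1"
  have "1 \<le> c'" "c' < K" using K \<open>ereal c < ereal K\<close> by (auto simp: c'_def)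
  have "Limsup at_top (\<lambda>t. ereal (\<sigma> (K powr \<gamma> * t) / \<sigma> t)) < ereal c'"
    using c by (rule order.strict_trans2) (simp add: c'_def)
  hence "\<forall>\<^sub>F t in at_top. ereal (\<sigma> (K powr \<gamma> * t) / \<sigma> t) < ereal c'" by (rule Limsup_lessD)
  with pos have "\<forall>\<^sub>F t in at_top. 0 \<le> \<sigma> t \<and> \<sigma> (K powr \<gamma> * t) \<le> c' * \<sigma> t"
    by eventually_elim (simp add: pos_divide_less_eq)
  moreover have "1 < K powr \<gamma>" using K \<open>0 < \<gamma>\<close> by (simp add: gr_one_powr)
  ultimately have "power_growth_bound \<sigma> (ln c' / ln (K powr \<gamma>))"
    using \<open>1 \<le> c'\<close> by (intro power_growth_bound_of_dilation[OF mono])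
  moreover have "0 \<le> ln c' / ln (K powr \<gamma>)"
    using K \<open>0 < \<gamma>\<close> \<open>1 \<le> c'\<close> by (simp add: zero_le_divide_iff)
  moreover have "ln c' / ln (K powr \<gamma>) * \<gamma> < 1"
  proof -
    have "ln c' < ln K" using \<open>1 \<le> c'\<close> \<open>c' < K\<close> by simp
    thus ?thesis using K \<open>0 < \<gamma>\<close> by (simp add: ln_powr)
  qed
  ultimately show thesis using that by blast
qed

lemma power_growth_bound_imp_prop_P:
  assumes pos: "\<forall>\<^sub>F t in at_top. 0 < \<sigma> t" and "power_growth_bound \<sigma> b"
    and "0 < \<gamma>" and "b * \<gamma> < 1"
  shows "prop_P \<sigma> \<gamma>"
proof -
  obtain C where C: "\<forall>\<^sub>F t in at_top. \<forall>k\<ge>1. \<sigma> (k * t) \<le> C * k powr b * \<sigma> t"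
    using assms(2) by (auto simp: power_growth_bound_def)
  define C' where "C' = max C 1"
  define K where "K = (2 * C') powr (1 / (1 - \<gamma> * b))"
  have "1 < K"
    unfolding K_def using assms(4) by (intro gr_one_powr) (auto simp: C'_def mult.commute)
  have "K = K powr (1 - \<gamma> * b) * K powr (\<gamma> * b)" using \<open>1 < K\<close> by (simp flip: powr_add)
  also have "K powr (1 - \<gamma> * b) = 2 * C'"
    unfolding K_def using assms(4) by (simp add: powr_powr C'_def mult.commute)
  finally have "C' * K powr (\<gamma> * b) < K"
    using \<open>1 < K\<close> by (simp add: C'_def)
  have "\<forall>\<^sub>F t in at_top. ereal (\<sigma> (K powr \<gamma> * t) / \<sigma> t) \<le> ereal (C' * K powr (\<gamma> * b))"
    using C pos
  proof eventually_elim
    case (elim t)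
    have "\<sigma> (K powr \<gamma> * t) \<le> C * (K powr \<gamma>) powr b * \<sigma> t"
      using elim \<open>1 < K\<close> \<open>0 < \<gamma>\<close> by (simp add: ge_one_powr_ge_zero less_imp_le)
    also have "\<dots> \<le> C' * K powr (\<gamma> * b) * \<sigma> t"
      using elim by (intro mult_right_mono) (auto simp: C'_def powr_powr)
    finally show ?case using elim by (simp add: field_simps)
  qed
  hence "Limsup at_top (\<lambda>t. ereal (\<sigma> (K powr \<gamma> * t) / \<sigma> t)) \<le> ereal (C' * K powr (\<gamma> * b))"
    by (rule Limsup_bounded)
  also have "\<dots> < ereal K" using \<open>C' * K powr (\<gamma> * b) < K\<close> by simp
  finally show ?thesis using \<open>1 < K\<close> by (auto simp: prop_P_def)
qed

lemma gamma_index_ge: "0 < \<gamma> \<Longrightarrow> prop_P \<sigma> \<gamma> \<Longrightarrow> ereal \<gamma> \<le> gamma_index \<sigma>"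
  unfolding gamma_index_def by (auto intro: Sup_upper)

lemma gamma_index_nonneg: "0 \<le> gamma_index \<sigma>"
  by (metis gamma_index_def gamma_index_ge order.trans ereal_less_eq(5) less_imp_le order.refl)

lemma gamma_index_le:
  "0 \<le> x \<Longrightarrow> (\<And>\<gamma>. 0 < \<gamma> \<Longrightarrow> prop_P \<sigma> \<gamma> \<Longrightarrow> ereal \<gamma> \<le> x) \<Longrightarrow> gamma_index \<sigma> \<le> x"
  unfolding gamma_index_def by (auto intro!: Sup_least)

lemma gamma_index_shift:
  assumes up: "\<And>\<gamma>. 0 < \<gamma> \<Longrightarrow> prop_P \<sigma> \<gamma> \<Longrightarrow> prop_P \<tau> (\<gamma> + 1)"
    and down: "\<And>\<gamma>. 1 < \<gamma> \<Longrightarrow> prop_P \<tau> \<gamma> \<Longrightarrow> prop_P \<sigma> (\<gamma> - 1)"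
    and "1 < gamma_index \<tau>"
  shows "gamma_index \<tau> = gamma_index \<sigma> + 1"
proof (rule antisym)
  have "1 \<le> gamma_index \<sigma> + 1" using add_right_mono[OF gamma_index_nonneg, of 1 \<sigma>] by simp
  show "gamma_index \<tau> \<le> gamma_index \<sigma> + 1"
  proof (rule gamma_index_le)
    show "0 \<le> gamma_index \<sigma> + 1" using \<open>1 \<le> gamma_index \<sigma> + 1\<close> by (rule order.trans[rotated]) simp
    fix \<gamma> assume "0 < \<gamma>" "prop_P \<tau> \<gamma>"
    show "ereal \<gamma> \<le> gamma_index \<sigma> + 1"
    proof (cases "1 < \<gamma>")
      case True
      hence "ereal (\<gamma> - 1) \<le> gamma_index \<sigma>" using down \<open>prop_P \<tau> \<gamma>\<close> by (intro gamma_index_ge) auto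
      hence "ereal (\<gamma> - 1) + 1 \<le> gamma_index \<sigma> + 1" by (rule add_right_mono)
      thus ?thesis by simp
    qed (use \<open>1 \<le> gamma_index \<sigma> + 1\<close> in \<open>auto intro: order.trans[rotated]\<close>)
  qed
  show "gamma_index \<sigma> + 1 \<le> gamma_index \<tau>"
  proof (cases "gamma_index \<tau>")
    case (real r)
    have "gamma_index \<sigma> \<le> ereal (r - 1)"
    proof (rule gamma_index_le)
      show "0 \<le> ereal (r - 1)" using assms(3) real by simp
      fix \<gamma> assume "0 < \<gamma>" "prop_P \<sigma> \<gamma>"
      hence "ereal (\<gamma> + 1) \<le> ereal r"
        using up gamma_index_ge real by (metis add_pos_pos zero_less_one)
      thus "ereal \<gamma> \<le> ereal (r - 1)" by simp
    qed
    hence "gamma_index \<sigma> + 1 \<le> ereal (r - 1) + 1" by (rule add_right_mono)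
    thus ?thesis using real by simp
  qed (use assms(3) in auto)
qed

text \<open>The last point where the diagonal lies below \<open>\<phi>\<close>; taking the supremum avoids any
  continuity assumption on \<open>\<phi>\<close>.\<close>

definition crossing :: "(real \<Rightarrow> real) \<Rightarrow> real" where
  "crossing \<phi> = Sup {s. 0 < s \<and> s \<le> \<phi> s}"

lemma crossing_upper:
  assumes "bdd_above {s. 0 < s \<and> s \<le> \<phi> s}" and "0 < s" "s \<le> \<phi> s"
  shows "s \<le> crossing \<phi>"
  unfolding crossing_def using assms by (intro cSup_upper) auto

lemma one_le_crossing:
  "bdd_above {s. 0 < s \<and> s \<le> \<phi> s} \<Longrightarrow> 1 \<le> \<phi> 1 \<Longrightarrow> 1 \<le> crossing \<phi>"
  by (rule crossing_upper) auto

lemma crossing_least: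
  assumes "1 \<le> \<phi> 1" and "\<And>s. 0 < s \<Longrightarrow> s \<le> \<phi> s \<Longrightarrow> s \<le> B"
  shows "crossing \<phi> \<le> B"
  unfolding crossing_def using assms by (intro cSup_least) (auto intro!: exI[of _ 1])

lemma less_of_crossing_less:
  assumes "bdd_above {s. 0 < s \<and> s \<le> \<phi> s}" and "crossing \<phi> < s" "0 < s"
  shows "\<phi> s < s"
  using crossing_upper[OF assms(1,3)] assms(2) by fastforce

lemma less_crossingE:
  assumes "1 \<le> \<phi> 1" and "s < crossing \<phi>"
  obtains s' where "s < s'" "0 < s'" "s' \<le> \<phi> s'"
  using less_cSupD[of "{s. 0 < s \<and> s \<le> \<phi> s}" s] assms unfolding crossing_def by force

locale fact_weight_pair =
  fixes M :: "nat \<Rightarrow> real"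
  assumes pos: "\<And>p. 0 < M p" and M0: "M 0 = 1"
    and root_tendsto: "filterlim (\<lambda>p. root p (M p)) at_top sequentially"
    and root_fact_tendsto: "filterlim (\<lambda>p. root p (fact p * M p)) at_top sequentially"
begin

abbreviation \<sigma> where "\<sigma> \<equiv> assoc_fun M"
abbreviation \<tau> where "\<tau> \<equiv> assoc_fun (\<lambda>p. fact p * M p)"

sublocale M: weak_weight M
  using pos M0 root_tendsto by unfold_locales
sublocale Mhat: weak_weight "\<lambda>p. fact p * M p"
  using pos M0 root_fact_tendsto by unfold_locales auto

lemma assoc_fact_le:
  assumes "0 < t" "0 < s"
  shows "\<tau> t \<le> \<sigma> (t / s) + s"
proof -
  obtain p where p: "\<tau> t = real p * ln t - ln (fact p * M p)"
    using Mhat.assoc_fun_attained[OF assms(1)] by blast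
  have "ln (s ^ p / fact p) \<le> ln (exp s)"
    using assms(2) power_div_fact_le_exp[of s p] by (subst ln_le_cancel_iff) auto
  hence "real p * ln s - ln (fact p) \<le> s" using assms(2) by (simp add: ln_div ln_realpow)
  moreover have "real p * ln (t / s) - ln (M p) \<le> \<sigma> (t / s)"
    using assms by (intro M.le_assoc_fun) auto
  ultimately show ?thesis using p assms pos[of p] by (simp add: ln_mult ln_div algebra_simps)
qed

text \<open>\<open>p\<close> is the index attaining the supremum that defines \<open>\<sigma> u\<close>.\<close>

lemma assoc_le_assoc_fact_index:
  assumes "0 < u"
  obtains p :: nat where "real p \<le> \<sigma> (exp 1 * u)"
    and "p \<noteq> 0 \<Longrightarrow> real p \<le> \<tau> (exp 1 * u * real p)"
    and "\<And>s. 0 < s \<Longrightarrow> real p \<le> s \<Longrightarrow> \<sigma> u \<le> \<tau> (u * s)"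
proof -
  obtain p where p: "\<sigma> u = real p * ln u - ln (M p)"
    using M.assoc_fun_attained[OF assms] by blast
  have "0 \<le> \<sigma> u" using M.assoc_fun_nonneg[OF assms] .
  have key: "\<sigma> u + real p * ln s - ln (fact p) \<le> \<tau> (u * s)" if "0 < s" for s
    using Mhat.le_assoc_fun[of "u * s" p] assms that p pos[of p]
    by (simp add: ln_mult algebra_simps)
  show thesis
  proof (rule that)
    show "real p \<le> \<sigma> (exp 1 * u)"
      using M.le_assoc_fun[of "exp 1 * u" p] p \<open>0 \<le> \<sigma> u\<close> assms by (simp add: ln_mult algebra_simps)
    show "\<sigma> u \<le> \<tau> (u * s)" if "0 < s" "real p \<le> s" for s
      using key[OF that(1)] ln_fact_le[OF that(2,1)] by linarith
    assume "p \<noteq> 0"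
    have "\<sigma> u + real p * ln (exp 1 * real p) - ln (fact p) \<le> \<tau> (u * (exp 1 * real p))"
      using \<open>p \<noteq> 0\<close> by (intro key) simp
    moreover have "ln (fact p) \<le> real p * ln (real p)" using \<open>p \<noteq> 0\<close> by (intro ln_fact_le) auto
    ultimately show "real p \<le> \<tau> (exp 1 * u * real p)"
      using \<open>0 \<le> \<sigma> u\<close> \<open>p \<noteq> 0\<close> by (simp add: ln_mult algebra_simps)
  qed
qed

lemma assoc_le_assoc_fact:
  assumes "0 < u" "0 < s" "\<sigma> (exp 1 * u) \<le> s"
  shows "\<sigma> u \<le> \<tau> (u * s)"
proof -
  obtain p :: nat where "real p \<le> \<sigma> (exp 1 * u)" "\<And>s. 0 < s \<Longrightarrow> real p \<le> s \<Longrightarrow> \<sigma> u \<le> \<tau> (u * s)"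
    using assoc_le_assoc_fact_index[OF assms(1)] by blast
  thus ?thesis using assms(2,3) by simp
qed

text \<open>\<open>\<tau> t \<le> \<sigma> (t / s) + s\<close> is best where the two terms balance; the crossing point
  of \<open>s = \<sigma> (e t / s)\<close> is comparable to \<open>\<tau> t\<close>.\<close>

definition \<tau>_approx :: "real \<Rightarrow> real" where
  "\<tau>_approx t = crossing (\<lambda>s. \<sigma> (exp 1 * t / s))"

context
  fixes b C v0 :: real
  assumes b: "0 \<le> b" and C: "1 \<le> C" and v0: "1 \<le> v0"
    and \<sigma>_ge_1: "\<And>v. v0 \<le> v \<Longrightarrow> 1 \<le> \<sigma> v"
    and \<sigma>_growth: "\<And>v k. v0 \<le> v \<Longrightarrow> 1 \<le> k \<Longrightarrow> \<sigma> (k * v) \<le> C * k powr b * \<sigma> v"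
begin

text \<open>Beyond this threshold, \<open>t / (2 * \<tau>_approx t)\<close> stays in the range \<open>[v0, \<infinity>)\<close>
  where the growth bound of \<open>\<sigma>\<close> applies.\<close>

lemma le_\<tau>_approx_threshold:
  assumes "2 * v0 * \<sigma> (2 * exp 1 * v0) \<le> t"
  shows "2 * v0 \<le> t"
proof -
  have "v0 \<le> 2 * exp 1 * v0"
    using v0 exp_ge_add_one_self[of 1] mult_right_mono[of 1 "2 * exp 1" v0] by simp
  hence "1 \<le> \<sigma> (2 * exp 1 * v0)" by (rule \<sigma>_ge_1)
  hence "2 * v0 * 1 \<le> 2 * v0 * \<sigma> (2 * exp 1 * v0)" using v0 by (intro mult_left_mono) auto
  thus ?thesis using assms by simp
qed

lemma \<tau>_approx_candidate_le:
  assumes t: "2 * v0 * \<sigma> (2 * exp 1 * v0) \<le> t" and "0 < s" "s \<le> \<sigma> (exp 1 * t / s)"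
  shows "2 * v0 * s \<le> t"
proof (rule ccontr)
  assume "\<not> 2 * v0 * s \<le> t"
  hence "exp 1 * t / s \<le> 2 * exp 1 * v0" using \<open>0 < s\<close> by (simp add: field_simps)
  hence "\<sigma> (exp 1 * t / s) \<le> \<sigma> (2 * exp 1 * v0)"
    using assms le_\<tau>_approx_threshold[OF t] v0 by (intro M.assoc_fun_mono) auto
  hence "2 * v0 * s \<le> 2 * v0 * \<sigma> (2 * exp 1 * v0)" using assms(3) v0 by simp
  with t \<open>\<not> 2 * v0 * s \<le> t\<close> show False by linarith
qed

lemma \<tau>_approx_crossing:
  assumes t: "2 * v0 * \<sigma> (2 * exp 1 * v0) \<le> t"
  shows "1 \<le> \<tau>_approx t" and "2 * v0 * \<tau>_approx t \<le> t"
    and "\<sigma> (exp 1 * t / (2 * \<tau>_approx t)) < 2 * \<tau>_approx t"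
    and "\<tau>_approx t / 2 \<le> \<sigma> (2 * exp 1 * t / \<tau>_approx t)"
proof -
  define \<phi> where "\<phi> = (\<lambda>s. \<sigma> (exp 1 * t / s))"
  have S: "\<tau>_approx t = crossing \<phi>" by (simp add: \<tau>_approx_def \<phi>_def)
  have "2 * v0 \<le> t" by (rule le_\<tau>_approx_threshold[OF t])
  note small = \<tau>_approx_candidate_le[OF t, folded \<phi>_def]
  have bdd: "bdd_above {s. 0 < s \<and> s \<le> \<phi> s}"
    using small v0 by (intro bdd_aboveI[of _ "t / (2 * v0)"]) (auto simp: field_simps \<phi>_def)
  have "v0 \<le> exp 1 * t" using \<open>2 * v0 \<le> t\<close> v0 le_exp_one_mult[of t] by linarith
  hence one: "1 \<le> \<phi> 1" using \<sigma>_ge_1 by (simp add: \<phi>_def)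
  show S1: "1 \<le> \<tau>_approx t" using one_le_crossing[OF bdd one] S by simp
  show "2 * v0 * \<tau>_approx t \<le> t"
    using crossing_least[of \<phi> "t / (2 * v0)", OF one] small v0 S by (simp add: field_simps \<phi>_def)
  show "\<sigma> (exp 1 * t / (2 * \<tau>_approx t)) < 2 * \<tau>_approx t"
    using less_of_crossing_less[OF bdd, of "2 * crossing \<phi>"] S1 by (simp add: S \<phi>_def)
  obtain s' where s': "\<tau>_approx t / 2 < s'" "0 < s'" "s' \<le> \<phi> s'"
    using less_crossingE[of \<phi> "\<tau>_approx t / 2", OF one] S1 S by auto
  have "exp 1 * t / s' \<le> exp 1 * t / (\<tau>_approx t / 2)"
    using s'(1,2) S1 \<open>2 * v0 \<le> t\<close> v0 by (intro divide_left_mono) auto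
  also have "\<dots> = 2 * exp 1 * t / \<tau>_approx t" by (simp add: field_simps)
  finally have "\<phi> s' \<le> \<sigma> (2 * exp 1 * t / \<tau>_approx t)"
    using s'(2) \<open>2 * v0 \<le> t\<close> v0 unfolding \<phi>_def by (intro M.assoc_fun_mono) auto
  thus "\<tau>_approx t / 2 \<le> \<sigma> (2 * exp 1 * t / \<tau>_approx t)" using s' by (simp add: \<phi>_def)
qed

lemma assoc_fact_le_\<tau>_approx:
  assumes t: "2 * v0 * \<sigma> (2 * exp 1 * v0) \<le> t"
  shows "\<tau> t \<le> 4 * \<tau>_approx t"
proof -
  note S = \<tau>_approx_crossing[OF t]
  have "0 < t" using S(1,2) v0 by (smt (verit) mult_pos_pos)
  have "\<tau> t \<le> \<sigma> (t / (2 * \<tau>_approx t)) + 2 * \<tau>_approx t"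
    using assoc_fact_le[OF \<open>0 < t\<close>, of "2 * \<tau>_approx t"] S(1) by simp
  moreover have "\<sigma> (t / (2 * \<tau>_approx t)) \<le> \<sigma> (exp 1 * t / (2 * \<tau>_approx t))"
    using S(1) \<open>0 < t\<close> exp_ge_add_one_self[of 1]
    by (intro M.assoc_fun_mono divide_right_mono) auto
  ultimately show ?thesis using S(3) by linarith
qed

lemma \<tau>_approx_le_assoc_fact:
  assumes t: "2 * v0 * \<sigma> (2 * exp 1 * v0) \<le> t"
  shows "\<tau>_approx t \<le> 2 * C * (4 * exp 1) powr b * \<tau> t"
proof -
  note S = \<tau>_approx_crossing[OF t]
  define w where "w = t / (2 * \<tau>_approx t)"
  have "v0 \<le> w" using S(1,2) by (simp add: w_def field_simps)
  have "\<sigma> w \<le> \<tau> (w * (2 * \<tau>_approx t))"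
    using S(1,3) \<open>v0 \<le> w\<close> v0 by (intro assoc_le_assoc_fact) (auto simp: w_def)
  hence "\<sigma> w \<le> \<tau> t" using S(1) by (simp add: w_def)
  have "\<tau>_approx t / 2 \<le> \<sigma> ((4 * exp 1) * w)"
    using S(1,4) by (simp add: w_def field_simps)
  also have "\<dots> \<le> C * (4 * exp 1) powr b * \<sigma> w"
    using \<open>v0 \<le> w\<close> exp_ge_add_one_self[of 1] by (intro \<sigma>_growth) auto
  also have "\<dots> \<le> C * (4 * exp 1) powr b * \<tau> t"
    using \<open>\<sigma> w \<le> \<tau> t\<close> C by (intro mult_left_mono) auto
  finally show ?thesis by simp
qed

lemma \<tau>_approx_ratio_le:
  assumes "v0 \<le> w" "\<sigma> w < 2 * S" "0 < S" "0 < r" "1 \<le> k" and r: "2 * r * S \<le> \<sigma> (k / r * w)"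
  shows "r \<le> C powr (1 / (1 + b)) * k powr (b / (1 + b))"
proof (cases "k / r \<le> 1")
  case True
  hence "\<sigma> (k / r * w) \<le> \<sigma> w"
    using assms v0 mult_right_mono[OF True, of w] by (intro M.assoc_fun_mono) auto
  hence "2 * r * S < 2 * S" using assms by linarith
  hence "r < 1" using \<open>0 < S\<close> by simp
  also have "1 \<le> C powr (1 / (1 + b)) * k powr (b / (1 + b))"
    using C \<open>1 \<le> k\<close> b by (intro mult_ge1_I ge_one_powr_ge_zero) auto
  finally show ?thesis by simp
next
  case False
  have "2 * r * S \<le> C * (k / r) powr b * \<sigma> w"
    using r \<sigma>_growth[OF \<open>v0 \<le> w\<close>, of "k / r"] False by simp
  also have "\<dots> \<le> C * (k / r) powr b * (2 * S)" using assms(2) C by (intro mult_left_mono) auto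
  finally have "(2 * S) * r \<le> (2 * S) * (C * (k / r) powr b)" by (simp add: mult_ac)
  hence "r \<le> C * (k / r) powr b" using \<open>0 < S\<close> by (simp add: mult_le_cancel_left_pos)
  thus ?thesis using assms b C by (intro le_powr_of_le_mult_powr_div) auto
qed

lemma \<tau>_approx_growth:
  assumes t: "2 * v0 * \<sigma> (2 * exp 1 * v0) \<le> t" and k: "1 \<le> k"
  shows "\<tau>_approx (k * t) \<le> 4 * C powr (1 / (1 + b)) * k powr (b / (1 + b)) * \<tau>_approx t"
proof -
  note S0 = \<tau>_approx_crossing[OF t]
  have "0 < t" using S0(1,2) v0 by (smt (verit) mult_pos_pos)
  hence "t \<le> k * t" using k mult_right_mono[of 1 k t] by simp
  note S1 = \<tau>_approx_crossing[OF order.trans[OF t this]]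
  define r where "r = \<tau>_approx (k * t) / (4 * \<tau>_approx t)"
  define w where "w = exp 1 * t / (2 * \<tau>_approx t)"
  have "v0 \<le> t / (2 * \<tau>_approx t)" using S0(1,2) by (simp add: field_simps)
  hence "v0 \<le> w" using le_exp_one_mult[of "t / (2 * \<tau>_approx t)"] S0(1) \<open>0 < t\<close>
    by (simp add: w_def)
  moreover have "\<sigma> w < 2 * \<tau>_approx t" using S0(3) by (simp add: w_def)
  moreover have "0 < \<tau>_approx t" "0 < r" using S0(1) S1(1) by (simp_all add: r_def)
  moreover have "2 * r * \<tau>_approx t \<le> \<sigma> (k / r * w)"
    using S0(1) S1(4) by (simp add: r_def w_def field_simps)
  ultimately have "r \<le> C powr (1 / (1 + b)) * k powr (b / (1 + b))"
    using \<tau>_approx_ratio_le k by blast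
  thus ?thesis using S0(1) by (simp add: r_def field_simps)
qed

end

lemma power_growth_bound_assoc_fact:
  assumes "power_growth_bound \<sigma> b" and "0 \<le> b"
  shows "power_growth_bound \<tau> (b / (1 + b))"
proof -
  have "\<forall>\<^sub>F t in at_top. 1 \<le> \<sigma> t"
    using M.assoc_fun_tendsto_at_top by (simp add: filterlim_at_top)
  then obtain C v0 where C: "1 \<le> C" "1 \<le> v0" "\<And>v. v0 \<le> v \<Longrightarrow> 1 \<le> \<sigma> v"
    "\<And>v k. v0 \<le> v \<Longrightarrow> 1 \<le> k \<Longrightarrow> \<sigma> (k * v) \<le> C * k powr b * \<sigma> v"
    using power_growth_boundE[OF assms(1)] by blast
  note approx = \<tau>_approx_crossing(1) assoc_fact_le_\<tau>_approx \<tau>_approx_le_assoc_fact \<tau>_approx_growth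
  note approx = approx[OF assms(2) C]
  have "\<forall>\<^sub>F t in at_top. \<forall>k\<ge>1.
      \<tau>_approx (k * t) \<le> 4 * C powr (1 / (1 + b)) * k powr (b / (1 + b)) * \<tau>_approx t"
    using eventually_ge_at_top by eventually_elim (auto intro: approx(4))
  hence "power_growth_bound \<tau>_approx (b / (1 + b))" unfolding power_growth_bound_def by blast
  moreover have "\<forall>\<^sub>F t in at_top. 0 \<le> \<tau>_approx t \<and> \<tau> t \<le> 4 * \<tau>_approx t \<and>
      \<tau>_approx t \<le> 2 * C * (4 * exp 1) powr b * \<tau> t"
    using eventually_ge_at_top
    by eventually_elim (use approx(1-3) in \<open>auto intro: order.trans[OF zero_le_one]\<close>)
  ultimately show ?thesis by (rule power_growth_bound_comparable) simp
qed

text \<open>Dually, \<open>\<sigma> u \<le> \<tau> (u s)\<close> once \<open>s\<close> exceeds the maximising index, and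
  \<open>\<tau> (u s) \<le> \<sigma> u + s\<close>; the crossing point of \<open>s = \<tau> (e u s)\<close> is comparable to \<open>\<sigma> u\<close>.\<close>

definition \<sigma>_approx :: "real \<Rightarrow> real" where
  "\<sigma>_approx u = crossing (\<lambda>s. \<tau> (exp 1 * u * s))"

context
  fixes b C v0 :: real
  assumes b: "0 \<le> b" "b < 1" and C: "1 \<le> C" and v0: "1 \<le> v0"
    and \<tau>_ge_1: "\<And>v. v0 \<le> v \<Longrightarrow> 1 \<le> \<tau> v"
    and \<tau>_growth: "\<And>v k. v0 \<le> v \<Longrightarrow> 1 \<le> k \<Longrightarrow> \<tau> (k * v) \<le> C * k powr b * \<tau> v"
begin

lemma \<sigma>_approx_crossing_conditions:
  assumes "v0 \<le> u"
  shows "1 \<le> \<tau> (exp 1 * u * 1)" and "bdd_above {s. 0 < s \<and> s \<le> \<tau> (exp 1 * u * s)}"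
proof -
  have "v0 \<le> exp 1 * u" using assms v0 le_exp_one_mult[of u] by linarith
  thus "1 \<le> \<tau> (exp 1 * u * 1)" using \<tau>_ge_1 by simp
  have "s \<le> max 1 ((C * \<tau> (exp 1 * u)) powr (1 / (1 - b)))" if "0 < s" "s \<le> \<tau> (exp 1 * u * s)" for s
  proof (cases "s \<le> 1")
    case False
    have "s \<le> \<tau> (s * (exp 1 * u))" using that by (simp add: mult_ac)
    also have "\<dots> \<le> C * s powr b * \<tau> (exp 1 * u)"
      using False \<open>v0 \<le> exp 1 * u\<close> by (intro \<tau>_growth) auto
    finally have "s \<le> (C * \<tau> (exp 1 * u)) * (1 * s) powr b" by (simp add: mult_ac)
    hence "s \<le> (C * \<tau> (exp 1 * u)) powr (1 / (1 - b)) * 1 powr (b / (1 - b))"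
      using that b C \<tau>_ge_1[OF \<open>v0 \<le> exp 1 * u\<close>] by (intro le_powr_of_le_mult_powr_mult) auto
    thus ?thesis by simp
  qed simp
  thus "bdd_above {s. 0 < s \<and> s \<le> \<tau> (exp 1 * u * s)}" by (intro bdd_aboveI) blast
qed

lemma \<sigma>_approx_crossing:
  assumes "v0 \<le> u"
  shows "1 \<le> \<sigma>_approx u"
    and "\<tau> (exp 1 * u * (2 * \<sigma>_approx u)) < 2 * \<sigma>_approx u"
    and "\<And>s. 0 < s \<Longrightarrow> s \<le> \<tau> (exp 1 * u * s) \<Longrightarrow> s \<le> \<sigma>_approx u"
proof -
  note cond = \<sigma>_approx_crossing_conditions[OF assms]
  show "1 \<le> \<sigma>_approx u"
    unfolding \<sigma>_approx_def by (rule one_le_crossing[OF cond(2)]) (use cond(1) in simp)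
  thus "\<tau> (exp 1 * u * (2 * \<sigma>_approx u)) < 2 * \<sigma>_approx u"
    unfolding \<sigma>_approx_def using less_of_crossing_less[OF cond(2)] by simp
  show "s \<le> \<sigma>_approx u" if "0 < s" "s \<le> \<tau> (exp 1 * u * s)" for s
    unfolding \<sigma>_approx_def using crossing_upper[OF cond(2)] that by simp
qed

lemma \<sigma>_approx_witnessE:
  assumes "v0 \<le> u"
  obtains s where "\<sigma>_approx u / 2 < s" "s \<le> \<sigma>_approx u" "s \<le> \<tau> (exp 1 * u * s)"
proof -
  have "\<sigma>_approx u / 2 < \<sigma>_approx u" using \<sigma>_approx_crossing(1)[OF assms] by simp
  then obtain s where "\<sigma>_approx u / 2 < s" "0 < s" "s \<le> \<tau> (exp 1 * u * s)"
    using less_crossingE[of "\<lambda>s. \<tau> (exp 1 * u * s)" "\<sigma>_approx u / 2"]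
      \<sigma>_approx_crossing_conditions(1)[OF assms]
    unfolding \<sigma>_approx_def by auto
  thus thesis using that \<sigma>_approx_crossing(3)[OF assms] by blast
qed

lemma assoc_le_\<sigma>_approx:
  assumes "v0 \<le> u"
  shows "\<sigma> u \<le> 2 * \<sigma>_approx u"
proof -
  note T = \<sigma>_approx_crossing[OF assms]
  have "0 < u" using assms v0 by linarith
  then obtain p :: nat where p: "p \<noteq> 0 \<Longrightarrow> real p \<le> \<tau> (exp 1 * u * real p)"
    "\<And>s. 0 < s \<Longrightarrow> real p \<le> s \<Longrightarrow> \<sigma> u \<le> \<tau> (u * s)"
    using assoc_le_assoc_fact_index by metis
  have "real p \<le> \<sigma>_approx u" using p(1) T(1,3) by (cases "p = 0") auto
  hence "\<sigma> u \<le> \<tau> (u * (2 * \<sigma>_approx u))" using T(1) by (intro p(2)) auto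
  also have "\<dots> \<le> \<tau> (exp 1 * u * (2 * \<sigma>_approx u))"
    using T(1) \<open>0 < u\<close> le_exp_one_mult[of u] by (intro Mhat.assoc_fun_mono mult_right_mono) auto
  also have "\<dots> < 2 * \<sigma>_approx u" by (rule T(2))
  finally show ?thesis by simp
qed

lemma \<sigma>_approx_le_assoc:
  assumes "0 < \<epsilon>" "\<epsilon> \<le> 1" "4 * C * (exp 1 / \<epsilon>) powr b * \<epsilon> \<le> 1" and "v0 \<le> \<epsilon> * u"
  shows "\<epsilon> * \<sigma>_approx u \<le> \<sigma> u"
proof (rule ccontr)
  assume "\<not> \<epsilon> * \<sigma>_approx u \<le> \<sigma> u"
  define T where "T = \<sigma>_approx u"
  have "0 < u" using assms v0 by (smt (verit) mult_nonneg_nonpos)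
  hence "\<epsilon> * u \<le> u" using mult_right_mono[OF assms(2), of u] by simp
  hence "v0 \<le> u" using assms(4) by linarith
  note Tc = \<sigma>_approx_crossing[OF this, folded T_def]
  obtain s where s: "T / 2 < s" "s \<le> T" "s \<le> \<tau> (exp 1 * u * s)"
    using \<sigma>_approx_witnessE[OF \<open>v0 \<le> u\<close>] unfolding T_def by blast
  have "v0 \<le> \<epsilon> * u * T"
    using assms(4) Tc(1) v0 mult_left_mono[of 1 T "\<epsilon> * u"] by simp
  have "s \<le> \<tau> (exp 1 * u * T)"
    using s \<open>0 < u\<close> by (intro order.trans[OF s(3)] Mhat.assoc_fun_mono) auto
  also have "exp 1 * u * T = (exp 1 / \<epsilon>) * (\<epsilon> * u * T)" using \<open>0 < \<epsilon>\<close> by simp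
  also have "\<tau> \<dots> \<le> C * (exp 1 / \<epsilon>) powr b * \<tau> (\<epsilon> * u * T)"
    using \<open>v0 \<le> \<epsilon> * u * T\<close> assms(1,2) exp_ge_add_one_self[of 1]
    by (intro \<tau>_growth) (auto simp: field_simps)
  also have "\<dots> \<le> C * (exp 1 / \<epsilon>) powr b * (\<sigma> u + \<epsilon> * T)"
    using assoc_fact_le[of "\<epsilon> * u * T" "\<epsilon> * T"] assms(1) \<open>0 < u\<close> Tc(1) C
    by (intro mult_left_mono) auto
  also have "\<dots> < C * (exp 1 / \<epsilon>) powr b * (2 * (\<epsilon> * T))"
    using \<open>\<not> \<epsilon> * \<sigma>_approx u \<le> \<sigma> u\<close> C assms(1) by (intro mult_strict_left_mono) (auto simp: T_def)
  also have "\<dots> = (4 * C * (exp 1 / \<epsilon>) powr b * \<epsilon>) * (T / 2)" by (simp add: algebra_simps)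
  also have "\<dots> \<le> T / 2" using mult_right_mono[OF assms(3), of "T / 2"] Tc(1) by simp
  finally show False using s(1) by simp
qed

lemma \<sigma>_approx_ratio_le:
  assumes "v0 \<le> w" "\<tau> w < 2 * T" "0 < T" "0 < r" "1 \<le> k" and r: "2 * r * T \<le> \<tau> (k * r * w)"
  shows "r \<le> C powr (1 / (1 - b)) * k powr (b / (1 - b))"
proof (cases "k * r \<le> 1")
  case True
  hence "\<tau> (k * r * w) \<le> \<tau> w"
    using assms v0 mult_right_mono[OF True, of w] by (intro Mhat.assoc_fun_mono) auto
  hence "2 * r * T < 2 * T" using assms by linarith
  hence "r < 1" using \<open>0 < T\<close> by simp
  also have "1 \<le> C powr (1 / (1 - b)) * k powr (b / (1 - b))"
    using C \<open>1 \<le> k\<close> b by (intro mult_ge1_I ge_one_powr_ge_zero) auto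
  finally show ?thesis by simp
next
  case False
  have "2 * r * T \<le> C * (k * r) powr b * \<tau> w"
    using r \<tau>_growth[OF \<open>v0 \<le> w\<close>, of "k * r"] False by simp
  also have "\<dots> \<le> C * (k * r) powr b * (2 * T)" using assms(2) C by (intro mult_left_mono) auto
  finally have "(2 * T) * r \<le> (2 * T) * (C * (k * r) powr b)" by (simp add: mult_ac)
  hence "r \<le> C * (k * r) powr b" using \<open>0 < T\<close> by (simp add: mult_le_cancel_left_pos)
  thus ?thesis using assms b C by (intro le_powr_of_le_mult_powr_mult) auto
qed

lemma \<sigma>_approx_growth:
  assumes u: "v0 \<le> u" and k: "1 \<le> k"
  shows "\<sigma>_approx (k * u) \<le> 4 * C powr (1 / (1 - b)) * k powr (b / (1 - b)) * \<sigma>_approx u"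
proof -
  note T0 = \<sigma>_approx_crossing[OF u]
  have "0 < u" using u v0 by linarith
  hence "u \<le> k * u" using mult_right_mono[OF k, of u] by simp
  hence "v0 \<le> k * u" using u by linarith
  obtain s where s: "\<sigma>_approx (k * u) / 2 < s" "s \<le> \<tau> (exp 1 * (k * u) * s)"
    using \<sigma>_approx_witnessE[OF \<open>v0 \<le> k * u\<close>] by blast
  define r where "r = s / (2 * \<sigma>_approx u)"
  define w where "w = exp 1 * u * (2 * \<sigma>_approx u)"
  have "exp 1 * u * 1 \<le> exp 1 * u * (2 * \<sigma>_approx u)"
    using T0(1) \<open>0 < u\<close> by (intro mult_left_mono) auto
  hence "v0 \<le> w" unfolding w_def using u le_exp_one_mult[OF less_imp_le[OF \<open>0 < u\<close>]] by linarith
  moreover have "\<tau> w < 2 * \<sigma>_approx u" using T0(2) by (simp add: w_def)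
  moreover have "0 < \<sigma>_approx u" "0 < r"
    using s(1) \<sigma>_approx_crossing(1)[OF \<open>v0 \<le> k * u\<close>] T0(1) by (simp_all add: r_def)
  moreover have "2 * r * \<sigma>_approx u \<le> \<tau> (k * r * w)"
    using s(2) T0(1) by (simp add: r_def w_def field_simps)
  ultimately have "r \<le> C powr (1 / (1 - b)) * k powr (b / (1 - b))"
    using \<sigma>_approx_ratio_le k by blast
  hence "4 * r * \<sigma>_approx u \<le> 4 * C powr (1 / (1 - b)) * k powr (b / (1 - b)) * \<sigma>_approx u"
    using T0(1) by (simp add: mult_right_mono)
  moreover have "\<sigma>_approx (k * u) < 4 * r * \<sigma>_approx u" using s(1) T0(1) by (simp add: r_def)
  ultimately show ?thesis by simp
qed

end

lemma power_growth_bound_assoc: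
  assumes "power_growth_bound \<tau> b" and "0 \<le> b" "b < 1"
  shows "power_growth_bound \<sigma> (b / (1 - b))"
proof -
  have "\<forall>\<^sub>F t in at_top. 1 \<le> \<tau> t"
    using Mhat.assoc_fun_tendsto_at_top by (simp add: filterlim_at_top)
  then obtain C v0 where C: "1 \<le> C" "1 \<le> v0" "\<And>v. v0 \<le> v \<Longrightarrow> 1 \<le> \<tau> v"
    "\<And>v k. v0 \<le> v \<Longrightarrow> 1 \<le> k \<Longrightarrow> \<tau> (k * v) \<le> C * k powr b * \<tau> v"
    using power_growth_boundE[OF assms(1)] by blast
  obtain \<epsilon> where "0 < \<epsilon>" "\<epsilon> \<le> 1" "4 * C * (exp 1 / \<epsilon>) powr b * \<epsilon> \<le> 1"
    using balancing_scaleE[OF C(1) assms(2,3)] .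
  note approx = \<sigma>_approx_crossing(1) assoc_le_\<sigma>_approx \<sigma>_approx_le_assoc \<sigma>_approx_growth
  note approx = approx[OF assms(2,3) C]
  have "\<forall>\<^sub>F u in at_top. \<forall>k\<ge>1.
      \<sigma>_approx (k * u) \<le> 4 * C powr (1 / (1 - b)) * k powr (b / (1 - b)) * \<sigma>_approx u"
    using eventually_ge_at_top by eventually_elim (auto intro: approx(4))
  hence "power_growth_bound \<sigma>_approx (b / (1 - b))" unfolding power_growth_bound_def by blast
  moreover have "\<forall>\<^sub>F u in at_top. 0 \<le> \<sigma>_approx u \<and> \<sigma> u \<le> 2 * \<sigma>_approx u \<and>
      \<sigma>_approx u \<le> (1 / \<epsilon>) * \<sigma> u"
    using eventually_ge_at_top[of "v0 / \<epsilon>"]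
  proof eventually_elim
    case (elim u)
    hence "v0 \<le> \<epsilon> * u" using \<open>0 < \<epsilon>\<close> by (simp add: field_simps)
    hence "0 < u" using \<open>0 < \<epsilon>\<close> C(2) by (smt (verit) mult_nonneg_nonpos)
    hence "\<epsilon> * u \<le> u" using mult_right_mono[OF \<open>\<epsilon> \<le> 1\<close>, of u] by simp
    hence "v0 \<le> u" using \<open>v0 \<le> \<epsilon> * u\<close> by linarith
    thus ?case
      using approx(1,2)[of u] approx(3)[of \<epsilon> u] \<open>v0 \<le> \<epsilon> * u\<close> \<open>0 < \<epsilon>\<close> \<open>\<epsilon> \<le> 1\<close>
        \<open>4 * C * (exp 1 / \<epsilon>) powr b * \<epsilon> \<le> 1\<close> by (auto simp: field_simps)
  qed
  ultimately show ?thesis by (rule power_growth_bound_comparable) simp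
qed

lemma prop_P_assoc_fact_add_one:
  assumes "0 < \<gamma>" and "prop_P \<sigma> \<gamma>"
  shows "prop_P \<tau> (\<gamma> + 1)"
proof -
  have "\<forall>\<^sub>F t in at_top. 0 < \<sigma> t" "\<forall>\<^sub>F t in at_top. 0 < \<tau> t"
    using M.assoc_fun_tendsto_at_top Mhat.assoc_fun_tendsto_at_top
    by (simp_all add: filterlim_at_top_dense)
  obtain b where b: "0 \<le> b" "b * \<gamma> < 1" "power_growth_bound \<sigma> b"
    using prop_P_imp_power_growth_bound[OF M.assoc_fun_mono_on \<open>\<forall>\<^sub>F t in at_top. 0 < \<sigma> t\<close> assms] .
  have "b / (1 + b) * (\<gamma> + 1) < 1" using b by (simp add: field_simps)
  thus ?thesis using power_growth_bound_assoc_fact[OF b(3,1)] \<open>\<forall>\<^sub>F t in at_top. 0 < \<tau> t\<close> assms(1)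
    by (intro power_growth_bound_imp_prop_P) auto
qed

lemma prop_P_assoc_diff_one:
  assumes "1 < \<gamma>" and "prop_P \<tau> \<gamma>"
  shows "prop_P \<sigma> (\<gamma> - 1)"
proof -
  have "\<forall>\<^sub>F t in at_top. 0 < \<sigma> t" "\<forall>\<^sub>F t in at_top. 0 < \<tau> t"
    using M.assoc_fun_tendsto_at_top Mhat.assoc_fun_tendsto_at_top
    by (simp_all add: filterlim_at_top_dense)
  obtain b where b: "0 \<le> b" "b * \<gamma> < 1" "power_growth_bound \<tau> b"
    using prop_P_imp_power_growth_bound[OF Mhat.assoc_fun_mono_on \<open>\<forall>\<^sub>F t in at_top. 0 < \<tau> t\<close>] assms
    by (metis less_trans zero_less_one)
  have "b < 1" using b assms(1) by (smt (verit) mult_less_cancel_left1)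
  have "b / (1 - b) * (\<gamma> - 1) < 1" using b \<open>b < 1\<close> by (simp add: field_simps)
  thus ?thesis using power_growth_bound_assoc[OF b(3,1) \<open>b < 1\<close>] \<open>\<forall>\<^sub>F t in at_top. 0 < \<sigma> t\<close> assms(1)
    by (intro power_growth_bound_imp_prop_P) auto
qed

end

theorem corollary4p11:
  fixes M :: "nat \<Rightarrow> real"
  assumes "\<forall>p. M p > 0" and "M 0 = 1"
    and "weight_sequence (\<lambda>p. fact p * M p)"
    and "filterlim (\<lambda>p. root p (M p)) at_top sequentially"
    and "gamma_index (assoc_fun (\<lambda>p. fact p * M p)) > 1"
  shows "gamma_index (assoc_fun (\<lambda>p. fact p * M p)) = gamma_index (assoc_fun M) + 1"
proof -
  interpret fact_weight_pair M
    using assms(1-4) by unfold_locales (auto simp: weight_sequence_def)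
  show ?thesis
    using gamma_index_shift prop_P_assoc_fact_add_one prop_P_assoc_diff_one assms(5) by blast
qed

end
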